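(* Let $X_1,\dots,X_n$ be independent real-valued random variables with continuous distributions, with $X_1,\dots,X_{k_1}$ i.i.d. and $X_{k_1+1},\dots,X_n$ i.i.d. Let $R_i=\#\{j:X_j\le X_i\}$ be the combined-sample ranks. For $1\le m<k_1$ let $S_m=\sum_{i=1}^mR_i$. Then for every $\delta>0$, $$\Pr(|S_m-\mathbb E[S_m]|>\delta)\le 2\exp\!\left(-2\min(m,k_1-m,n-k_1)\left(\frac{\delta}{2\max(k_1-m,n-k_1)\,m}\right)^2\right).$$ *)

theory Defs
  imports "HOL-Probability.Probability"
begin

definition rank :: "nat \<Rightarrow> (nat \<Rightarrow> 'a \<Rightarrow> real) \<Rightarrow> nat \<Rightarrow> 'a \<Rightarrow> nat" where
  "rank n X i \<omega> = card {j \<in> {1..n}. X j \<omega> \<le> X i \<omega>}"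

end

theory Submission
  imports Defs
begin

text \<open>Ties have probability zero, and without ties the ranks of \<open>X 1, \<dots>, X m\<close> among themselves
  add up to \<open>m(m+1)/2\<close>. Hence, with \<open>q = k1 - m\<close> and \<open>r = n - k1\<close>, almost surely
  \<open>S\<^sub>m = m(m+1)/2 + m U\<close>, where \<open>U\<close> is the three-sample U-statistic of the samples
  \<open>X 1, \<dots>, X m\<close>, \<open>X (m+1), \<dots>, X k1\<close>, \<open>X (k1+1), \<dots>, X n\<close> with the kernel
  \<open>(x, y, z) \<mapsto> q [y \<le> x] + r [z \<le> x]\<close>, which takes values in \<open>[0, q + r]\<close>.
  Following Hoeffding, shifting the three index ranges along a common cyclic rotation writes \<open>U\<close> as
  an average of sums of \<open>K = min m q r\<close> independent kernel values. By convexity of \<open>exp\<close>, the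
  moment generating function of such an average is bounded by that of a single sum, so Hoeffding's
  lemma gives \<open>P(|U - E U| \<ge> \<epsilon>) \<le> 2 exp(-2 K \<epsilon>\<^sup>2 / (q + r)\<^sup>2)\<close>. Take \<open>\<epsilon> = \<delta> / m\<close> and
  use \<open>q + r \<le> 2 max q r\<close>.\<close>

section \<open>Hoeffding bounds for averages of independent sums\<close>

lemma (in prob_space) prob_ge_le_exp_of_mgf_bound:
  assumes Y: "Y \<in> borel_measurable M" and \<sigma>: "\<sigma> > 0" and \<epsilon>: "\<epsilon> > 0"
    and mgf: "\<And>l. l > 0 \<Longrightarrow> (\<integral>\<^sup>+\<omega>. ennreal (exp (l * Y \<omega>)) \<partial>M) \<le> ennreal (exp (l\<^sup>2 * \<sigma> / 8))"
  shows "prob {\<omega>\<in>space M. Y \<omega> \<ge> \<epsilon>} \<le> exp (-2 * \<epsilon>\<^sup>2 / \<sigma>)"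
proof -
  define l where "l = 4 * \<epsilon> / \<sigma>"
  have l: "l > 0" using \<sigma> \<epsilon> by (simp add: l_def)
  have "ennreal (prob {\<omega>\<in>space M. Y \<omega> \<ge> \<epsilon>}) = emeasure M {\<omega>\<in>space M. Y \<omega> \<ge> \<epsilon>}"
    by (simp add: emeasure_eq_measure)
  also have "\<dots> \<le> ennreal (exp (-l * \<epsilon>)) * (\<integral>\<^sup>+\<omega>\<in>space M. exp (l * Y \<omega>) \<partial>M)"
    by (intro Chernoff_ineq_nn_integral_ge l sets.top borel_measurable_times Y
        borel_measurable_indicator)
  also have "(\<integral>\<^sup>+\<omega>\<in>space M. exp (l * Y \<omega>) \<partial>M) = (\<integral>\<^sup>+\<omega>. exp (l * Y \<omega>) \<partial>M)"
    by (intro nn_integral_cong) auto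
  also have "ennreal (exp (-l * \<epsilon>)) * \<dots> \<le> ennreal (exp (-l * \<epsilon>)) * ennreal (exp (l\<^sup>2 * \<sigma> / 8))"
    by (intro mult_left_mono mgf l) auto
  also have "\<dots> = ennreal (exp (\<sigma> * l\<^sup>2 / 8 - l * \<epsilon>))"
    by (simp add: mult_exp_exp flip: ennreal_mult)
  also have "\<sigma> * l\<^sup>2 / 8 - l * \<epsilon> = -2 * \<epsilon>\<^sup>2 / \<sigma>"
    using \<sigma> by (simp add: l_def field_simps power2_eq_square)
  finally show ?thesis
    by (subst (asm) ennreal_le_iff) auto
qed

lemma (in prob_space) indep_sum_mgf_le:
  fixes Z :: "'i \<Rightarrow> 'a \<Rightarrow> real"
  assumes fin: "finite T" and ind: "indep_vars (\<lambda>_. borel) Z T"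
    and bnd: "\<And>t \<omega>. t \<in> T \<Longrightarrow> \<omega> \<in> space M \<Longrightarrow> Z t \<omega> \<in> {a..b}"
    and l: "l > 0"
  shows "(\<integral>\<^sup>+\<omega>. ennreal (exp (l * (\<Sum>t\<in>T. Z t \<omega> - expectation (Z t)))) \<partial>M)
          \<le> ennreal (exp (l\<^sup>2 * (real (card T) * (b - a)\<^sup>2) / 8))"
proof -
  have rv: "\<And>t. t \<in> T \<Longrightarrow> random_variable borel (Z t)"
    using ind unfolding indep_vars_def by auto
  have "(\<integral>\<^sup>+\<omega>. ennreal (exp (l * (\<Sum>t\<in>T. Z t \<omega> - expectation (Z t)))) \<partial>M) =
        (\<integral>\<^sup>+\<omega>. (\<Prod>t\<in>T. ennreal (exp (l * (Z t \<omega> - expectation (Z t))))) \<partial>M)"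
    by (intro nn_integral_cong)
       (simp_all add: sum_distrib_left exp_sum fin prod_ennreal)
  also have "\<dots> = (\<Prod>t\<in>T. \<integral>\<^sup>+\<omega>. ennreal (exp (l * (Z t \<omega> - expectation (Z t)))) \<partial>M)"
    by (intro indep_vars_nn_integral fin indep_vars_compose2[OF ind]) auto
  also have "\<dots> \<le> (\<Prod>t\<in>T. ennreal (exp (l\<^sup>2 * (b - a)\<^sup>2 / 8)))"
  proof (intro prod_mono_ennreal)
    fix t assume t: "t \<in> T"
    interpret interval_bounded_random_variable M "Z t" a b
      by unfold_locales (use t rv bnd in auto)
    show "(\<integral>\<^sup>+\<omega>. ennreal (exp (l * (Z t \<omega> - expectation (Z t)))) \<partial>M)
        \<le> ennreal (exp (l\<^sup>2 * (b - a)\<^sup>2 / 8))"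
      by (rule Hoeffdings_lemma_nn_integral) fact+
  qed
  also have "\<dots> = ennreal (exp (l\<^sup>2 * (real (card T) * (b - a)\<^sup>2) / 8))"
    by (simp add: ennreal_power exp_of_nat_mult[symmetric] mult_ac)
  finally show ?thesis .
qed

lemma (in prob_space) average_mgf_le:
  fixes Y :: "'i \<Rightarrow> 'a \<Rightarrow> real"
  assumes fin: "finite F" "F \<noteq> {}"
    and meas: "\<And>s. s \<in> F \<Longrightarrow> Y s \<in> borel_measurable M"
    and mgf: "\<And>s. s \<in> F \<Longrightarrow> (\<integral>\<^sup>+\<omega>. ennreal (exp (l * Y s \<omega>)) \<partial>M) \<le> B"
  shows "(\<integral>\<^sup>+\<omega>. ennreal (exp (l * ((\<Sum>s\<in>F. Y s \<omega>) / card F))) \<partial>M) \<le> B"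
proof -
  define c where "c = real (card F)"
  have c: "c > 0" using fin by (simp add: c_def card_gt_0_iff)
  have "(\<integral>\<^sup>+\<omega>. ennreal (exp (l * ((\<Sum>s\<in>F. Y s \<omega>) / card F))) \<partial>M)
      \<le> (\<integral>\<^sup>+\<omega>. (\<Sum>s\<in>F. ennreal (1 / c) * ennreal (exp (l * Y s \<omega>))) \<partial>M)"
  proof (intro nn_integral_mono)
    fix \<omega>
    have "exp (l * ((\<Sum>s\<in>F. Y s \<omega>) / card F)) = exp (\<Sum>s\<in>F. (1 / c) *\<^sub>R (l * Y s \<omega>))"
      by (simp add: c_def sum_distrib_left sum_divide_distrib)
    also have "\<dots> \<le> (\<Sum>s\<in>F. (1 / c) * exp (l * Y s \<omega>))"
      by (rule convex_on_sum[OF fin exp_convex]) (use c in \<open>auto simp: c_def\<close>)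
    finally have "ennreal (exp (l * ((\<Sum>s\<in>F. Y s \<omega>) / card F)))
        \<le> ennreal (\<Sum>s\<in>F. (1 / c) * exp (l * Y s \<omega>))"
      by (rule ennreal_leI)
    also have "\<dots> = (\<Sum>s\<in>F. ennreal (1 / c) * ennreal (exp (l * Y s \<omega>)))"
      using c by (intro sum_ennreal[symmetric, THEN trans] sum.cong refl ennreal_mult) auto
    finally show "ennreal (exp (l * ((\<Sum>s\<in>F. Y s \<omega>) / card F)))
        \<le> (\<Sum>s\<in>F. ennreal (1 / c) * ennreal (exp (l * Y s \<omega>)))" .
  qed
  also have "\<dots> = (\<Sum>s\<in>F. ennreal (1 / c) * \<integral>\<^sup>+\<omega>. ennreal (exp (l * Y s \<omega>)) \<partial>M)"
    using meas by (simp add: nn_integral_sum nn_integral_cmult)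
  also have "\<dots> \<le> (\<Sum>s\<in>F. ennreal (1 / c) * B)"
    by (intro sum_mono mult_left_mono mgf) auto
  also have "\<dots> = (ennreal c * ennreal (1 / c)) * B"
    by (simp add: c_def ennreal_of_nat_eq_real_of_nat mult.assoc)
  also have "ennreal c * ennreal (1 / c) = 1"
    using c by (simp flip: ennreal_mult)
  finally show ?thesis by simp
qed

lemma (in prob_space) average_of_indep_sums_ge:
  fixes Z :: "'s \<Rightarrow> 'i \<Rightarrow> 'a \<Rightarrow> real"
  assumes F: "finite F" "F \<noteq> {}" and T: "finite T" "T \<noteq> {}" and ab: "a < b"
    and ind: "\<And>s. s \<in> F \<Longrightarrow> indep_vars (\<lambda>_. borel) (Z s) T"
    and bnd: "\<And>s t \<omega>. s \<in> F \<Longrightarrow> t \<in> T \<Longrightarrow> \<omega> \<in> space M \<Longrightarrow> Z s t \<omega> \<in> {a..b}"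
    and \<epsilon>: "\<epsilon> > 0"
  shows "prob {\<omega>\<in>space M. (\<Sum>s\<in>F. \<Sum>t\<in>T. Z s t \<omega> - expectation (Z s t)) / card F \<ge> \<epsilon>}
          \<le> exp (-2 * \<epsilon>\<^sup>2 / (real (card T) * (b - a)\<^sup>2))"
proof -
  have [measurable]: "Z s t \<in> borel_measurable M" if "s \<in> F" "t \<in> T" for s t
    using ind[OF that(1)] that(2) unfolding indep_vars_def by auto
  show ?thesis
  proof (rule prob_ge_le_exp_of_mgf_bound[OF _ _ \<epsilon>])
    show "(\<lambda>\<omega>. (\<Sum>s\<in>F. \<Sum>t\<in>T. Z s t \<omega> - expectation (Z s t)) / card F) \<in> borel_measurable M"
      by (intro borel_measurable_divide borel_measurable_sum borel_measurable_diff) auto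
    show "real (card T) * (b - a)\<^sup>2 > 0"
      using T ab by (simp add: card_gt_0_iff)
  next
    fix l :: real assume l: "l > 0"
    show "(\<integral>\<^sup>+\<omega>. ennreal (exp (l * ((\<Sum>s\<in>F. \<Sum>t\<in>T. Z s t \<omega> - expectation (Z s t)) / card F))) \<partial>M)
          \<le> ennreal (exp (l\<^sup>2 * (real (card T) * (b - a)\<^sup>2) / 8))"
      by (intro average_mgf_le F indep_sum_mgf_le T ind bnd l borel_measurable_sum
          borel_measurable_diff) auto
  qed
qed

lemma (in prob_space) average_of_indep_sums_abs_ge:
  fixes Z :: "'s \<Rightarrow> 'i \<Rightarrow> 'a \<Rightarrow> real"
  assumes F: "finite F" "F \<noteq> {}" and T: "finite T" "T \<noteq> {}" and ab: "a < b"
    and ind: "\<And>s. s \<in> F \<Longrightarrow> indep_vars (\<lambda>_. borel) (Z s) T"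
    and bnd: "\<And>s t \<omega>. s \<in> F \<Longrightarrow> t \<in> T \<Longrightarrow> \<omega> \<in> space M \<Longrightarrow> Z s t \<omega> \<in> {a..b}"
    and \<epsilon>: "\<epsilon> > 0"
  shows "prob {\<omega>\<in>space M. \<bar>(\<Sum>s\<in>F. \<Sum>t\<in>T. Z s t \<omega> - expectation (Z s t)) / card F\<bar> \<ge> \<epsilon>}
          \<le> 2 * exp (-2 * \<epsilon>\<^sup>2 / (real (card T) * (b - a)\<^sup>2))"
proof -
  define G where "G \<omega> = (\<Sum>s\<in>F. \<Sum>t\<in>T. Z s t \<omega> - expectation (Z s t)) / card F" for \<omega>
  have [measurable]: "Z s t \<in> borel_measurable M" if "s \<in> F" "t \<in> T" for s t
    using ind[OF that(1)] that(2) unfolding indep_vars_def by auto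
  have G: "G \<in> borel_measurable M"
    unfolding G_def
    by (intro borel_measurable_divide borel_measurable_sum borel_measurable_diff) auto
  have upper: "prob {\<omega>\<in>space M. G \<omega> \<ge> \<epsilon>} \<le> exp (-2 * \<epsilon>\<^sup>2 / (real (card T) * (b - a)\<^sup>2))"
    unfolding G_def by (rule average_of_indep_sums_ge[OF F T ab ind bnd \<epsilon>])
  have "prob {\<omega>\<in>space M. (\<Sum>s\<in>F. \<Sum>t\<in>T. - Z s t \<omega> - expectation (\<lambda>\<omega>. - Z s t \<omega>)) / card F \<ge> \<epsilon>}
      \<le> exp (-2 * \<epsilon>\<^sup>2 / (real (card T) * (- a - - b)\<^sup>2))"
    by (rule average_of_indep_sums_ge[OF F T _ indep_vars_compose2[OF ind] _ \<epsilon>])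
      (use ab bnd in auto)
  moreover have "(\<Sum>s\<in>F. \<Sum>t\<in>T. - Z s t \<omega> - expectation (\<lambda>\<omega>. - Z s t \<omega>)) / card F = - G \<omega>" for \<omega>
    by (simp add: G_def sum_negf[symmetric] sum_subtractf[symmetric] minus_divide_left algebra_simps
        del: sum_negf)
  moreover have "(- a - - b)\<^sup>2 = (b - a)\<^sup>2"
    by (simp add: power2_eq_square algebra_simps)
  ultimately have lower: "prob {\<omega>\<in>space M. G \<omega> \<le> - \<epsilon>}
      \<le> exp (-2 * \<epsilon>\<^sup>2 / (real (card T) * (b - a)\<^sup>2))"
    by (simp add: le_minus_iff)
  have "{\<omega>\<in>space M. \<bar>G \<omega>\<bar> \<ge> \<epsilon>} = {\<omega>\<in>space M. G \<omega> \<ge> \<epsilon>} \<union> {\<omega>\<in>space M. G \<omega> \<le> - \<epsilon>}"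
    by auto
  then have "prob {\<omega>\<in>space M. \<bar>G \<omega>\<bar> \<ge> \<epsilon>} \<le> prob {\<omega>\<in>space M. G \<omega> \<ge> \<epsilon>} + prob {\<omega>\<in>space M. G \<omega> \<le> - \<epsilon>}"
    using G by (simp add: measure_Un_le)
  then show ?thesis
    using upper lower by (simp add: G_def)
qed

section \<open>Three-sample U-statistics\<close>

lemma inj_on_add_mod: "inj_on (\<lambda>x. (x + s) mod p) {..<p :: nat}"
proof (rule inj_onI)
  fix x y assume "x \<in> {..<p}" "y \<in> {..<p}" "(x + s) mod p = (y + s) mod p"
  then show "x = y"
    using nat_mod_eq_iff[of "x + s" p "y + s"] nat_mod_eq_iff[of x p y] by simp
qed

lemma sum_rotate_mod:
  fixes h :: "nat \<Rightarrow> 'b::comm_monoid_add"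
  assumes "0 < p"
  shows "(\<Sum>s<p. h ((s + t) mod p)) = (\<Sum>s<p. h s)"
proof -
  have "(\<lambda>s. (s + t) mod p) ` {..<p} = {..<p}"
    using assms by (intro endo_inj_surj inj_on_add_mod) auto
  then have "bij_betw (\<lambda>s. (s + t) mod p) {..<p} {..<p}"
    by (simp add: bij_betw_def inj_on_add_mod)
  then show ?thesis
    by (rule sum.reindex_bij_betw)
qed

lemma sum_rotations_triple:
  fixes f :: "nat \<Rightarrow> nat \<Rightarrow> nat \<Rightarrow> 'b::comm_semiring_1"
  assumes "0 < p" "0 < q" "0 < r"
  shows "(\<Sum>(s1, s2, s3)\<in>{..<p}\<times>{..<q}\<times>{..<r}.
            \<Sum>t<K. f ((s1 + t) mod p) ((s2 + t) mod q) ((s3 + t) mod r))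
       = of_nat K * (\<Sum>i<p. \<Sum>j<q. \<Sum>l<r. f i j l)"
proof -
  have "(\<Sum>(s1, s2, s3)\<in>{..<p}\<times>{..<q}\<times>{..<r}.
          \<Sum>t<K. f ((s1 + t) mod p) ((s2 + t) mod q) ((s3 + t) mod r))
      = (\<Sum>t<K. \<Sum>s1<p. \<Sum>s2<q. \<Sum>s3<r. f ((s1 + t) mod p) ((s2 + t) mod q) ((s3 + t) mod r))"
    by (simp add: sum.cartesian_product' sum.swap[of _ "{..<K}"])
  also have "\<dots> = (\<Sum>t<K. \<Sum>i<p. \<Sum>j<q. \<Sum>l<r. f i j l)"
  proof (rule sum.cong[OF refl])
    fix t
    have "(\<Sum>s1<p. \<Sum>s2<q. \<Sum>s3<r. f ((s1 + t) mod p) ((s2 + t) mod q) ((s3 + t) mod r))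
        = (\<Sum>s1<p. \<Sum>s2<q. \<Sum>s3<r. f s1 ((s2 + t) mod q) ((s3 + t) mod r))"
      by (rule sum_rotate_mod[OF assms(1),
            of "\<lambda>s1. \<Sum>s2<q. \<Sum>s3<r. f s1 ((s2 + t) mod q) ((s3 + t) mod r)"])
    also have "\<dots> = (\<Sum>s1<p. \<Sum>s2<q. \<Sum>s3<r. f s1 s2 ((s3 + t) mod r))"
      using sum_rotate_mod[OF assms(2), of "\<lambda>s2. \<Sum>s3<r. f _ s2 ((s3 + t) mod r)" t] by simp
    also have "\<dots> = (\<Sum>s1<p. \<Sum>s2<q. \<Sum>s3<r. f s1 s2 s3)"
      using sum_rotate_mod[OF assms(3), of "\<lambda>s3. f _ _ s3" t] by simp
    finally show "(\<Sum>s1<p. \<Sum>s2<q. \<Sum>s3<r. f ((s1 + t) mod p) ((s2 + t) mod q) ((s3 + t) mod r))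
        = (\<Sum>i<p. \<Sum>j<q. \<Sum>l<r. f i j l)" .
  qed
  finally show ?thesis by simp
qed

lemma (in prob_space) indep_vars_kernel_triples:
  fixes X :: "'i \<Rightarrow> 'a \<Rightarrow> real" and g :: "real \<times> real \<times> real \<Rightarrow> real"
  assumes indep: "indep_vars (\<lambda>_. borel) X I"
    and g [measurable]: "g \<in> borel_measurable borel"
    and sub: "\<And>t. t \<in> T \<Longrightarrow> {a t, b t, c t} \<subseteq> I"
    and disj: "\<And>t t'. t \<in> T \<Longrightarrow> t' \<in> T \<Longrightarrow> t \<noteq> t' \<Longrightarrow> {a t, b t, c t} \<inter> {a t', b t', c t'} = {}"
  shows "indep_vars (\<lambda>_. borel) (\<lambda>t \<omega>. g (X (a t) \<omega>, X (b t) \<omega>, X (c t) \<omega>)) T"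
proof -
  have "indep_vars (\<lambda>t. PiM {a t, b t, c t} (\<lambda>_. borel))
      (\<lambda>t \<omega>. restrict (\<lambda>i. X i \<omega>) {a t, b t, c t}) T"
    by (rule indep_vars_restrict[OF indep]) (use sub disj in \<open>auto simp: disjoint_family_on_def\<close>)
  then have "indep_vars (\<lambda>_. borel)
      (\<lambda>t \<omega>. (\<lambda>f. g (f (a t), f (b t), f (c t))) (restrict (\<lambda>i. X i \<omega>) {a t, b t, c t})) T"
    by (rule indep_vars_compose2) measurable
  then show ?thesis
    by (rule indep_vars_cong[THEN iffD1, rotated -1]) auto
qed

lemma (in prob_space) integrable_bounded_kernel:
  fixes g :: "real \<times> real \<times> real \<Rightarrow> real"
  assumes g: "g \<in> borel_measurable borel" and g_bnd: "\<And>x. g x \<in> {lo..hi}"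
    and uvw: "u \<in> borel_measurable M" "v \<in> borel_measurable M" "w \<in> borel_measurable M"
  shows "integrable M (\<lambda>\<omega>. g (u \<omega>, v \<omega>, w \<omega>))"
proof (rule integrable_const_bound[where B = "max \<bar>lo\<bar> \<bar>hi\<bar>"])
  have "norm (g x) \<le> max \<bar>lo\<bar> \<bar>hi\<bar>" for x
    using g_bnd[of x] by auto
  then show "AE \<omega> in M. norm (g (u \<omega>, v \<omega>, w \<omega>)) \<le> max \<bar>lo\<bar> \<bar>hi\<bar>"
    by simp
  show "(\<lambda>\<omega>. g (u \<omega>, v \<omega>, w \<omega>)) \<in> borel_measurable M"
    by (intro measurable_compose[OF _ g] borel_measurable_Pair uvw)
qed

lemma (in prob_space) three_sample_U_statistic_abs_ge:
  fixes X :: "'i \<Rightarrow> 'a \<Rightarrow> real" and a b c :: "nat \<Rightarrow> 'i" and g :: "real \<times> real \<times> real \<Rightarrow> real"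
  assumes indep: "indep_vars (\<lambda>_. borel) X I"
    and inj: "inj_on a {..<p}" "inj_on b {..<q}" "inj_on c {..<r}"
    and sub: "a ` {..<p} \<subseteq> I" "b ` {..<q} \<subseteq> I" "c ` {..<r} \<subseteq> I"
    and disj: "a ` {..<p} \<inter> b ` {..<q} = {}" "a ` {..<p} \<inter> c ` {..<r} = {}"
      "b ` {..<q} \<inter> c ` {..<r} = {}"
    and g: "g \<in> borel_measurable borel" and g_bnd: "\<And>x. g x \<in> {lo..hi}" and lo_hi: "lo < hi"
    and pqr: "0 < p" "0 < q" "0 < r" and \<epsilon>: "\<epsilon> > 0"
  defines "U \<equiv> \<lambda>\<omega>. (\<Sum>i<p. \<Sum>j<q. \<Sum>l<r. g (X (a i) \<omega>, X (b j) \<omega>, X (c l) \<omega>)) / (p * q * r)"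
  shows "prob {\<omega>\<in>space M. \<bar>U \<omega> - expectation U\<bar> \<ge> \<epsilon>}
           \<le> 2 * exp (-2 * real (min p (min q r)) * \<epsilon>\<^sup>2 / (hi - lo)\<^sup>2)"
proof -
  define K where "K = min p (min q r)"
  have K: "0 < K" "K \<le> p" "K \<le> q" "K \<le> r"
    using pqr by (auto simp: K_def)
  define F where "F = {..<p} \<times> {..<q} \<times> {..<r}"
  define W where "W i j l \<omega> = g (X (a i) \<omega>, X (b j) \<omega>, X (c l) \<omega>)" for i j l \<omega>
  define Z where "Z s t = W ((fst s + t) mod p) ((fst (snd s) + t) mod q) ((snd (snd s) + t) mod r)"
    for s :: "nat \<times> nat \<times> nat" and t
  have X_meas [measurable]: "X i \<in> borel_measurable M" if "i \<in> I" for i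
    using indep that unfolding indep_vars_def by auto
  have W_int: "integrable M (W i j l)" if "i < p" "j < q" "l < r" for i j l
    unfolding W_def[abs_def] using that sub
    by (intro integrable_bounded_kernel[OF g g_bnd] X_meas) auto
  have Z_indep: "indep_vars (\<lambda>_. borel) (Z s) {..<K}" for s
  proof -
    have rot_ne: "(u + t) mod n \<noteq> (u + t') mod n"
      if "t < K" "t' < K" "t \<noteq> t'" "K \<le> n" for u n t t'
      using inj_on_eq_iff[OF inj_on_add_mod[of u n], of t t'] that by (simp add: add.commute)
    have "{a ((fst s + t) mod p), b ((fst (snd s) + t) mod q), c ((snd (snd s) + t) mod r)}
        \<inter> {a ((fst s + t') mod p), b ((fst (snd s) + t') mod q), c ((snd (snd s) + t') mod r)} = {}"
      if "t < K" "t' < K" "t \<noteq> t'" for t t'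
    proof -
      have "a ((fst s + t) mod p) \<noteq> a ((fst s + t') mod p)"
        using inj_on_eq_iff[OF inj(1)] rot_ne[OF that K(2)] pqr(1) by simp
      moreover have "b ((fst (snd s) + t) mod q) \<noteq> b ((fst (snd s) + t') mod q)"
        using inj_on_eq_iff[OF inj(2)] rot_ne[OF that K(3)] pqr(2) by simp
      moreover have "c ((snd (snd s) + t) mod r) \<noteq> c ((snd (snd s) + t') mod r)"
        using inj_on_eq_iff[OF inj(3)] rot_ne[OF that K(4)] pqr(3) by simp
      moreover have "a x \<noteq> b y" "a x \<noteq> c z" "b y \<noteq> c z" if "x < p" "y < q" "z < r" for x y z
        using disj that by blast+
      ultimately show ?thesis
        using pqr by auto
    qed
    then have "indep_vars (\<lambda>_. borel)
        (\<lambda>t \<omega>. g (X (a ((fst s + t) mod p)) \<omega>, X (b ((fst (snd s) + t) mod q)) \<omega>,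
                 X (c ((snd (snd s) + t) mod r)) \<omega>)) {..<K}"
      using sub pqr by (intro indep_vars_kernel_triples[OF indep g]) auto
    then show ?thesis
      unfolding Z_def[abs_def] W_def[abs_def] .
  qed
  have U_W: "U = (\<lambda>\<omega>. (\<Sum>i<p. \<Sum>j<q. \<Sum>l<r. W i j l \<omega>) / (p * q * r))"
    by (simp add: U_def W_def)
  have EU: "expectation U = (\<Sum>i<p. \<Sum>j<q. \<Sum>l<r. expectation (W i j l)) / (p * q * r)"
  proof -
    have "expectation (\<lambda>\<omega>. \<Sum>i<p. \<Sum>j<q. \<Sum>l<r. W i j l \<omega>)
        = (\<Sum>i<p. expectation (\<lambda>\<omega>. \<Sum>j<q. \<Sum>l<r. W i j l \<omega>))"
      by (intro Bochner_Integration.integral_sum Bochner_Integration.integrable_sum W_int) auto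
    also have "\<dots> = (\<Sum>i<p. \<Sum>j<q. expectation (\<lambda>\<omega>. \<Sum>l<r. W i j l \<omega>))"
      by (intro sum.cong refl Bochner_Integration.integral_sum Bochner_Integration.integrable_sum
          W_int) auto
    also have "\<dots> = (\<Sum>i<p. \<Sum>j<q. \<Sum>l<r. expectation (W i j l))"
      by (intro sum.cong refl Bochner_Integration.integral_sum W_int) auto
    finally show ?thesis
      unfolding U_W by simp
  qed
  have average_eq: "(\<Sum>s\<in>F. \<Sum>t<K. Z s t \<omega> - expectation (Z s t)) / card F
      = K * (U \<omega> - expectation U)" for \<omega>
  proof -
    have "(\<Sum>s\<in>F. \<Sum>t<K. Z s t \<omega> - expectation (Z s t)) / card F
        = K * (\<Sum>i<p. \<Sum>j<q. \<Sum>l<r. W i j l \<omega> - expectation (W i j l)) / (p * q * r)"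
      unfolding F_def Z_def
      using sum_rotations_triple[OF pqr,
          where K = K and f = "\<lambda>i j l. W i j l \<omega> - expectation (W i j l)"]
      by (simp add: case_prod_beta card_cartesian_product)
    also have "\<dots> = K * (U \<omega> - expectation U)"
      unfolding EU by (simp add: U_W sum_subtractf flip: diff_divide_distrib)
    finally show ?thesis .
  qed
  have "prob {\<omega>\<in>space M. \<bar>U \<omega> - expectation U\<bar> \<ge> \<epsilon>}
      = prob {\<omega>\<in>space M. \<bar>(\<Sum>s\<in>F. \<Sum>t<K. Z s t \<omega> - expectation (Z s t)) / card F\<bar> \<ge> K * \<epsilon>}"
    using K(1) by (simp add: average_eq abs_mult)
  also have "\<dots> \<le> 2 * exp (-2 * (K * \<epsilon>)\<^sup>2 / (real (card {..<K}) * (hi - lo)\<^sup>2))"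
  proof (rule average_of_indep_sums_abs_ge[OF _ _ _ _ lo_hi Z_indep])
    show "Z s t \<omega> \<in> {lo..hi}" for s t \<omega>
      using g_bnd by (simp add: Z_def W_def)
  qed (use pqr K \<epsilon> in \<open>auto simp: F_def lessThan_empty_iff\<close>)
  also have "-2 * (K * \<epsilon>)\<^sup>2 / (real (card {..<K}) * (hi - lo)\<^sup>2) = -2 * real K * \<epsilon>\<^sup>2 / (hi - lo)\<^sup>2"
    using K by (simp add: power2_eq_square)
  finally show ?thesis
    by (simp add: K_def)
qed

section \<open>Ties and ranks\<close>

lemma (in prob_space) prob_tie_eq_0:
  fixes X :: "'i \<Rightarrow> 'a \<Rightarrow> real"
  assumes indep: "indep_vars (\<lambda>_. borel) X I" and ij: "i \<in> I" "j \<in> I" "i \<noteq> j"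
    and cont: "continuous_on UNIV (cdf (distr M borel (X j)))"
  shows "prob {\<omega>\<in>space M. X i \<omega> = X j \<omega>} = 0"
proof -
  have "indep_var borel ((\<lambda>f. f i) \<circ> (\<lambda>\<omega>. restrict (\<lambda>k. X k \<omega>) {i}))
                  borel ((\<lambda>f. f j) \<circ> (\<lambda>\<omega>. restrict (\<lambda>k. X k \<omega>) {j}))"
    using ij by (intro indep_var_compose[OF indep_var_restrict[OF indep]]) auto
  then have "indep_var borel (X i) borel (X j)"
    by (simp add: comp_def)
  then have [measurable]: "X i \<in> borel_measurable M" "X j \<in> borel_measurable M"
    and prod: "distr M borel (X i) \<Otimes>\<^sub>M distr M borel (X j)
        = distr M (borel \<Otimes>\<^sub>M borel) (\<lambda>\<omega>. (X i \<omega>, X j \<omega>))"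
    by (auto simp: indep_var_distribution_eq)
  interpret Xj: real_distribution "distr M borel (X j)"
    by simp
  define D where "D = {z :: real \<times> real. fst z = snd z}"
  have D: "D \<in> sets (borel \<Otimes>\<^sub>M borel)"
  proof -
    have "{z \<in> space (borel \<Otimes>\<^sub>M borel). fst z = (snd z :: real)} \<in> sets (borel \<Otimes>\<^sub>M borel)"
      by measurable
    then show ?thesis
      by (simp add: D_def space_pair_measure)
  qed
  have "emeasure M {\<omega>\<in>space M. X i \<omega> = X j \<omega>}
      = emeasure (distr M (borel \<Otimes>\<^sub>M borel) (\<lambda>\<omega>. (X i \<omega>, X j \<omega>))) D"
    using D by (subst emeasure_distr) (auto simp: D_def intro!: arg_cong[where f = "emeasure M"])
  also have "\<dots> = (\<integral>\<^sup>+x. emeasure (distr M borel (X j)) (Pair x -` D) \<partial>distr M borel (X i))"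
    using D by (simp flip: prod add: Xj.emeasure_pair_measure_alt)
  also have "\<dots> = 0"
  proof -
    have "emeasure (distr M borel (X j)) (Pair x -` D) = 0" for x
    proof -
      have "Pair x -` D = {x}"
        by (auto simp: D_def)
      moreover have "measure (distr M borel (X j)) {x} = 0"
        using cont by (simp add: continuous_on_eq_continuous_at Xj.isCont_cdf)
      ultimately show ?thesis
        by (simp add: Xj.emeasure_eq_measure)
    qed
    then show ?thesis
      by simp
  qed
  finally show ?thesis
    by (simp add: emeasure_eq_measure)
qed

lemma (in prob_space) AE_inj_on_indep_continuous:
  fixes X :: "'i \<Rightarrow> 'a \<Rightarrow> real"
  assumes indep: "indep_vars (\<lambda>_. borel) X I" and J: "finite J" "J \<subseteq> I"
    and cont: "\<And>j. j \<in> J \<Longrightarrow> continuous_on UNIV (cdf (distr M borel (X j)))"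
  shows "AE \<omega> in M. inj_on (\<lambda>j. X j \<omega>) J"
proof -
  have "AE \<omega> in M. X i \<omega> \<noteq> X j \<omega>" if "i \<in> J" "j \<in> J" "i \<noteq> j" for i j
  proof -
    have [measurable]: "X i \<in> borel_measurable M" "X j \<in> borel_measurable M"
      using indep that J unfolding indep_vars_def by auto
    have "prob {\<omega>\<in>space M. X i \<omega> = X j \<omega>} = 0"
      using that J by (intro prob_tie_eq_0[OF indep] cont) auto
    then show ?thesis
      by (simp add: prob_eq_0)
  qed
  then have "AE \<omega> in M. \<forall>i\<in>J. \<forall>j\<in>J. i \<noteq> j \<longrightarrow> X i \<omega> \<noteq> X j \<omega>"
    using J(1) by (intro eventually_ball_finite ballI) (auto intro: AE_I2)
  then show ?thesis
    by (rule eventually_mono) (auto simp: inj_on_def)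
qed

lemma real_rank_eq_sum: "real (rank n X i \<omega>) = (\<Sum>j=1..n. if X j \<omega> \<le> X i \<omega> then 1 else 0)"
  unfolding rank_def by (subst sum.inter_filter[symmetric]) auto

lemma sum_pairs_le_indicator_eq:
  fixes x :: "'i \<Rightarrow> real"
  assumes "finite A" "inj_on x A"
  shows "(\<Sum>i\<in>A. \<Sum>j\<in>A. if x j \<le> x i then 1 else 0 :: real) = real (card A) * (real (card A) + 1) / 2"
proof -
  let ?T = "\<Sum>i\<in>A. \<Sum>j\<in>A. if x j \<le> x i then 1 else 0 :: real"
  have "?T = (\<Sum>i\<in>A. \<Sum>j\<in>A. if x i \<le> x j then 1 else 0 :: real)"
    by (rule sum.swap)
  then have "2 * ?T
      = (\<Sum>i\<in>A. \<Sum>j\<in>A. (if x j \<le> x i then 1 else 0) + (if x i \<le> x j then 1 else 0 :: real))"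
    by (simp add: sum.distrib)
  also have "\<dots> = (\<Sum>i\<in>A. \<Sum>j\<in>A. 1 + (if i = j then 1 else 0 :: real))"
    using assms(2) by (intro sum.cong refl) (auto simp: inj_on_eq_iff)
  also have "\<dots> = real (card A) * (real (card A) + 1)"
    using assms(1) by (simp add: sum.distrib algebra_simps)
  finally show ?thesis
    by simp
qed

lemma sum_rank_eq:
  assumes "A \<subseteq> {1..n}" and inj: "inj_on (\<lambda>j. X j \<omega>) A"
  shows "(\<Sum>i\<in>A. real (rank n X i \<omega>))
       = real (card A) * (real (card A) + 1) / 2
         + (\<Sum>i\<in>A. \<Sum>j\<in>{1..n} - A. if X j \<omega> \<le> X i \<omega> then 1 else 0)"
proof -
  have A: "finite A"
    using assms(1) finite_subset by blast
  have rank_split: "real (rank n X i \<omega>) = (\<Sum>j\<in>A. if X j \<omega> \<le> X i \<omega> then 1 else 0)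
      + (\<Sum>j\<in>{1..n} - A. if X j \<omega> \<le> X i \<omega> then 1 else 0)" for i
  proof -
    have "real (rank n X i \<omega>) = (\<Sum>j\<in>{1..n}. if X j \<omega> \<le> X i \<omega> then 1 else 0)"
      by (rule real_rank_eq_sum)
    also have "\<dots> = (\<Sum>j\<in>{1..n} - A. if X j \<omega> \<le> X i \<omega> then 1 else 0)
        + (\<Sum>j\<in>A. if X j \<omega> \<le> X i \<omega> then 1 else 0)"
      using assms(1) by (intro sum.subset_diff) auto
    finally show ?thesis
      by simp
  qed
  show ?thesis
    by (simp add: rank_split sum.distrib sum_pairs_le_indicator_eq[OF A inj])
qed

definition rank_kernel :: "nat \<Rightarrow> nat \<Rightarrow> real \<times> real \<times> real \<Rightarrow> real" where
  "rank_kernel q r =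
     (\<lambda>(x, y, z). real q * (if y \<le> x then 1 else 0) + real r * (if z \<le> x then 1 else 0))"

lemma rank_kernel_measurable: "rank_kernel q r \<in> borel_measurable borel"
proof -
  have [measurable]: "fst \<in> borel_measurable (borel :: (real \<times> real \<times> real) measure)"
    "(\<lambda>x. fst (snd x)) \<in> borel_measurable (borel :: (real \<times> real \<times> real) measure)"
    "(\<lambda>x. snd (snd x)) \<in> borel_measurable (borel :: (real \<times> real \<times> real) measure)"
    by (intro borel_measurable_continuous_onI continuous_intros)+
  show ?thesis
    unfolding rank_kernel_def case_prod_beta by measurable
qed

lemma rank_kernel_bounds: "rank_kernel q r x \<in> {0..real q + real r}"
  by (auto simp: rank_kernel_def split: prod.split)

definition rank_U :: "nat \<Rightarrow> nat \<Rightarrow> nat \<Rightarrow> (nat \<Rightarrow> 'a \<Rightarrow> real) \<Rightarrow> 'a \<Rightarrow> real" where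
  "rank_U m q r X \<omega> = (\<Sum>i<m. \<Sum>j<q. \<Sum>l<r.
      rank_kernel q r (X (1 + i) \<omega>, X (m + 1 + j) \<omega>, X (m + q + 1 + l) \<omega>)) / (m * q * r)"

lemma sum_atLeastAtMost_shift_lessThan:
  fixes f :: "nat \<Rightarrow> 'b::comm_monoid_add"
  shows "sum f {Suc a..a + q} = (\<Sum>j<q. f (Suc (a + j)))"
proof (induction q)
  case (Suc q)
  have "{Suc a..a + Suc q} = insert (Suc (a + q)) {Suc a..a + q}"
    by auto
  then show ?case
    using Suc by (simp add: add.commute)
qed simp

lemma sum_rank_eq_rank_U:
  assumes inj: "inj_on (\<lambda>j. X j \<omega>) {1..m}" and "0 < m" "0 < q" "0 < r"
  shows "(\<Sum>i=1..m. real (rank (m + q + r) X i \<omega>))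
           = real m * (real m + 1) / 2 + m * rank_U m q r X \<omega>"
proof -
  define h where "h i j = (if X j \<omega> \<le> X i \<omega> then 1 else 0 :: real)" for i j
  have "{1..m + q + r} - {1..m} = {m + 1..m + q} \<union> {m + q + 1..m + q + r}"
    by auto
  then have "(\<Sum>i=1..m. \<Sum>j\<in>{1..m + q + r} - {1..m}. h i j)
      = (\<Sum>i<m. (\<Sum>j<q. h (1 + i) (m + 1 + j)) + (\<Sum>l<r. h (1 + i) (m + q + 1 + l)))"
    by (simp add: sum.union_disjoint sum_atLeastAtMost_shift_lessThan[where a = 0 and q = m, simplified]
        sum_atLeastAtMost_shift_lessThan[where a = m]
        sum_atLeastAtMost_shift_lessThan[where a = "m + q"])
  also have "\<dots> = m * ((\<Sum>i<m. \<Sum>j<q. \<Sum>l<r.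
      real q * h (1 + i) (m + 1 + j) + real r * h (1 + i) (m + q + 1 + l)) / (m * q * r))"
    using assms(2-4) by (simp add: sum.distrib flip: sum_distrib_left) (simp add: field_simps)
  finally show ?thesis
    using sum_rank_eq[of "{1..m}" "m + q + r" X \<omega>] inj
    by (simp add: h_def rank_kernel_def rank_U_def)
qed

lemma (in prob_space) AE_sum_rank_eq_rank_U:
  assumes indep: "indep_vars (\<lambda>_. borel) X {1..m + q + r}"
    and cont: "\<And>i. i \<in> {1..m} \<Longrightarrow> continuous_on UNIV (cdf (distr M borel (X i)))"
    and mqr: "0 < m" "0 < q" "0 < r"
  shows "AE \<omega> in M. (\<Sum>i=1..m. real (rank (m + q + r) X i \<omega>))
           = real m * (real m + 1) / 2 + m * rank_U m q r X \<omega>"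
proof -
  have "AE \<omega> in M. inj_on (\<lambda>j. X j \<omega>) {1..m}"
    by (intro AE_inj_on_indep_continuous[OF indep] cont) auto
  then show ?thesis
    by (rule eventually_mono) (rule sum_rank_eq_rank_U[OF _ mqr])
qed

lemma (in prob_space) borel_measurable_rank:
  assumes "\<And>j. j \<in> {1..n} \<Longrightarrow> X j \<in> borel_measurable M" and "i \<in> {1..n}"
  shows "(\<lambda>\<omega>. real (rank n X i \<omega>)) \<in> borel_measurable M"
  unfolding real_rank_eq_sum using assms
  by (intro borel_measurable_sum measurable_If borel_measurable_le) auto

lemma (in prob_space) integrable_rank_U:
  assumes "\<And>i. i \<in> {1..m + q + r} \<Longrightarrow> X i \<in> borel_measurable M"
  shows "integrable M (rank_U m q r X)"
  unfolding rank_U_def[abs_def]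
  by (intro integrable_divide Bochner_Integration.integrable_sum assms
      integrable_bounded_kernel[OF rank_kernel_measurable rank_kernel_bounds]) auto

lemma (in prob_space) rank_U_abs_ge:
  assumes indep: "indep_vars (\<lambda>_. borel) X {1..m + q + r}"
    and "0 < m" "0 < q" "0 < r" "\<epsilon> > 0"
  shows "prob {\<omega>\<in>space M. \<bar>rank_U m q r X \<omega> - expectation (rank_U m q r X)\<bar> \<ge> \<epsilon>}
           \<le> 2 * exp (-2 * real (min m (min q r)) * \<epsilon>\<^sup>2 / (real q + real r)\<^sup>2)"
proof -
  have "prob {\<omega>\<in>space M. \<bar>rank_U m q r X \<omega> - expectation (rank_U m q r X)\<bar> \<ge> \<epsilon>}
      \<le> 2 * exp (-2 * real (min m (min q r)) * \<epsilon>\<^sup>2 / (real q + real r - 0)\<^sup>2)"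
    unfolding rank_U_def[abs_def]
    by (rule three_sample_U_statistic_abs_ge[OF indep _ _ _ _ _ _ _ _ _
          rank_kernel_measurable rank_kernel_bounds]) (use assms in \<open>auto simp: inj_on_def\<close>)
  then show ?thesis
    by simp
qed

lemma (in prob_space) prob_abs_dev_gt_le_of_AE_affine:
  fixes S U :: "'a \<Rightarrow> real"
  assumes S_U: "AE \<omega> in M. S \<omega> = c + a * U \<omega>" and a: "a > 0"
    and U: "integrable M U" and S: "S \<in> borel_measurable M"
  shows "prob {\<omega>\<in>space M. \<bar>S \<omega> - expectation S\<bar> > \<delta>}
           \<le> prob {\<omega>\<in>space M. \<bar>U \<omega> - expectation U\<bar> \<ge> \<delta> / a}"
proof (rule finite_measure_mono_AE)
  have [measurable]: "U \<in> borel_measurable M"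
    using U by (rule borel_measurable_integrable)
  have "expectation S = expectation (\<lambda>\<omega>. c + a * U \<omega>)"
    by (intro integral_cong_AE S_U S) measurable
  also have "\<dots> = c + a * expectation U"
    using U by (simp add: prob_space)
  finally have ES: "expectation S = c + a * expectation U" .
  show "AE \<omega> in M. \<omega> \<in> {\<omega>\<in>space M. \<bar>S \<omega> - expectation S\<bar> > \<delta>}
      \<longrightarrow> \<omega> \<in> {\<omega>\<in>space M. \<bar>U \<omega> - expectation U\<bar> \<ge> \<delta> / a}"
    using S_U
  proof (rule eventually_mono)
    fix \<omega> assume "S \<omega> = c + a * U \<omega>"
    then have "\<bar>S \<omega> - expectation S\<bar> = a * \<bar>U \<omega> - expectation U\<bar>"
      using a by (simp add: ES abs_mult flip: right_diff_distrib)
    then show "\<omega> \<in> {\<omega>\<in>space M. \<bar>S \<omega> - expectation S\<bar> > \<delta>}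
        \<longrightarrow> \<omega> \<in> {\<omega>\<in>space M. \<bar>U \<omega> - expectation U\<bar> \<ge> \<delta> / a}"
      using a by (auto simp: pos_divide_le_eq mult.commute)
  qed
  show "{\<omega>\<in>space M. \<bar>U \<omega> - expectation U\<bar> \<ge> \<delta> / a} \<in> sets M"
    by measurable
qed

lemma exp_bound_sum_le_exp_bound_max:
  fixes K p q r \<delta> :: real
  assumes "K \<ge> 0" "p > 0" "q > 0" "r > 0"
  shows "exp (-2 * K * (\<delta> / p)\<^sup>2 / (q + r)\<^sup>2) \<le> exp (-2 * K * (\<delta> / (2 * max q r * p))\<^sup>2)"
proof -
  have "q + r \<le> 2 * max q r"
    by simp
  then have "(p * (q + r))\<^sup>2 \<le> (2 * max q r * p)\<^sup>2"
    using assms by (intro power_mono) (auto simp: mult.commute)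
  then have "K * (\<delta>\<^sup>2 / (2 * max q r * p)\<^sup>2) \<le> K * (\<delta>\<^sup>2 / (p * (q + r))\<^sup>2)"
    using assms by (intro mult_left_mono divide_left_mono) auto
  moreover have "-2 * K * (\<delta> / p)\<^sup>2 / (q + r)\<^sup>2 = -2 * (K * (\<delta>\<^sup>2 / (p * (q + r))\<^sup>2))"
    "-2 * K * (\<delta> / (2 * max q r * p))\<^sup>2 = -2 * (K * (\<delta>\<^sup>2 / (2 * max q r * p)\<^sup>2))"
    by (simp_all add: power_divide power_mult_distrib)
  ultimately show ?thesis
    by simp
qed

theorem lemma1:
  fixes M :: "'a measure" and X :: "nat \<Rightarrow> 'a \<Rightarrow> real"
    and n k1 m :: nat and \<delta> :: real
  assumes "prob_space M"
    and "\<And>i. i \<in> {1..n} \<Longrightarrow> X i \<in> borel_measurable M"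
    and "prob_space.indep_vars M (\<lambda>_. borel) X {1..n}"
    and "\<And>i. i \<in> {1..n} \<Longrightarrow> continuous_on UNIV (cdf (distr M borel (X i)))"
    and "\<And>i. i \<in> {1..k1} \<Longrightarrow> distr M borel (X i) = distr M borel (X 1)"
    and "\<And>i. i \<in> {k1+1..n} \<Longrightarrow> distr M borel (X i) = distr M borel (X (k1+1))"
    and "1 \<le> m" and "m < k1" and "k1 \<le> n"
    and "\<delta> > 0"
  shows "measure M {\<omega> \<in> space M.
            \<bar>(\<Sum>i=1..m. real (rank n X i \<omega>))
              - prob_space.expectation M (\<lambda>\<omega>. \<Sum>i=1..m. real (rank n X i \<omega>))\<bar> > \<delta>}
         \<le> 2 * exp (- 2 * real (min m (min (k1 - m) (n - k1)))
                 * (\<delta> / (2 * real (max (k1 - m) (n - k1)) * real m))\<^sup>2)"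
proof -
  interpret prob_space M by fact
  define q where "q = k1 - m"
  define r where "r = n - k1"
  show ?thesis
  proof (cases "r = 0")
    case True
    \<comment> \<open>then the exponent vanishes and the bound is \<open>2\<close>\<close>
    then show ?thesis
      by (simp add: q_def r_def order_trans[OF prob_le_1])
  next
    case False
    have n: "n = m + q + r" and mqr: "0 < m" "0 < q" "0 < r"
      using False assms(7-9) by (auto simp: q_def r_def)
    let ?S = "\<lambda>\<omega>. \<Sum>i=1..m. real (rank n X i \<omega>)" and ?U = "rank_U m q r X"
    have "AE \<omega> in M. ?S \<omega> = real m * (real m + 1) / 2 + m * ?U \<omega>"
      using AE_sum_rank_eq_rank_U[OF _ assms(4) mqr] assms(3) n by simp
    then have "prob {\<omega>\<in>space M. \<bar>?S \<omega> - expectation ?S\<bar> > \<delta>}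
        \<le> prob {\<omega>\<in>space M. \<bar>?U \<omega> - expectation ?U\<bar> \<ge> \<delta> / m}"
      using mqr n by (intro prob_abs_dev_gt_le_of_AE_affine integrable_rank_U borel_measurable_sum
          borel_measurable_rank assms(2)) auto
    also have "\<dots> \<le> 2 * exp (-2 * real (min m (min q r)) * (\<delta> / m)\<^sup>2 / (real q + real r)\<^sup>2)"
      using assms(3,10) mqr n by (intro rank_U_abs_ge) auto
    also have "\<dots>
        \<le> 2 * exp (-2 * real (min m (min q r)) * (\<delta> / (2 * max (real q) (real r) * real m))\<^sup>2)"
      using exp_bound_sum_le_exp_bound_max[of "min m (min q r)" m q r \<delta>] mqr by simp
    finally show ?thesis
      by (simp add: q_def r_def of_nat_max)
  qed
qed

end
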